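(* Let $N$ be a finite $\Lambda$-module with $|N/(1-t)N|=l$. Then there exists a finite $\Lambda$-module $M$ containing $N$ as a $\Lambda$-submodule such that $|M/N|=l$ and $(1-t)M=N$.
   Context: $\Lambda=\mathbb Z[t,t^{-1}]$, the ring of Laurent polynomials over $\mathbb Z$. A $\Lambda$-module is an abelian group with an automorphism by which $t$ acts. *)

theory Defs
  imports "HOL-Algebra.Algebra"
begin

text \<open>A module over Lambda = Z[t,t^-1] is an abelian group (written multiplicatively,
as in HOL-Algebra) together with a group automorphism T (the action of t).\<close>

definition lam_module :: "('a, 'b) monoid_scheme \<Rightarrow> ('a \<Rightarrow> 'a) \<Rightarrow> bool" where
  "lam_module G T \<longleftrightarrow> comm_group G \<and> T \<in> hom G G \<and> bij_betw T (carrier G) (carrier G)"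

definition lam_hom :: "('a, 'b) monoid_scheme \<Rightarrow> ('a \<Rightarrow> 'a) \<Rightarrow> ('c, 'd) monoid_scheme \<Rightarrow> ('c \<Rightarrow> 'c)
    \<Rightarrow> ('a \<Rightarrow> 'c) \<Rightarrow> bool" where
  "lam_hom G T H S f \<longleftrightarrow> f \<in> hom G H \<and> (\<forall>x \<in> carrier G. f (T x) = S (f x))"

definition one_minus_t :: "('a, 'b) monoid_scheme \<Rightarrow> ('a \<Rightarrow> 'a) \<Rightarrow> 'a set" where
  "one_minus_t G T = (\<lambda>x. x \<otimes>\<^bsub>G\<^esub> inv\<^bsub>G\<^esub> (T x)) ` carrier G"

end

theory Submission
  imports Defs
begin

text \<open>
  Call a finite module M with an injective Lambda-map f : N \<rightarrow> M admissible if
  (1 - t)M \<subseteq> f(N) and |M| |(1 - t)N| = |N| |(1 - t)M|.  N itself is admissible.  If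
  (1 - t)M \<noteq> f(N), pick x \<in> f(N) outside (1 - t)M, let d > 1 be its order modulo (1 - t)M and
  write d x = (1 - t) y.  Adjoining an element e with d e = y and t e = e - x multiplies both
  |M| and |(1 - t)M| by d, so the result is again admissible with a larger (1 - t)-image.
  Since (1 - t)M \<subseteq> f(N), this stops after finitely many steps with (1 - t)M = f(N), and then
  Lagrange's theorem gives |M / f(N)| = |N / (1 - t)N| = l.
\<close>

lemma lam_moduleD:
  assumes "lam_module G T"
  shows "comm_group G" "T \<in> hom G G" "bij_betw T (carrier G) (carrier G)"
  using assms unfolding lam_module_def by auto

lemma lam_hom_comp:
  assumes f: "lam_hom G T H S f" and g: "lam_hom H S K R g"
  shows "lam_hom G T K R (g \<circ> f)"
proof -
  have "f \<in> hom G H" "g \<in> hom H K" using f g unfolding lam_hom_def by auto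
  moreover have "g (f (T a)) = R (g (f a))" if "a \<in> carrier G" for a
    using that f g \<open>f \<in> hom G H\<close> unfolding lam_hom_def by (simp add: hom_in_carrier)
  ultimately show ?thesis unfolding lam_hom_def by (simp add: hom_compose)
qed

lemma one_minus_t_hom:
  assumes "lam_module G T"
  shows "(\<lambda>x. x \<otimes>\<^bsub>G\<^esub> inv\<^bsub>G\<^esub> (T x)) \<in> hom G G"
proof -
  interpret G: comm_group G using lam_moduleD[OF assms] by simp
  have "T \<in> hom G G" using lam_moduleD[OF assms] by simp
  then have "T a \<in> carrier G" "T (a \<otimes>\<^bsub>G\<^esub> b) = T a \<otimes>\<^bsub>G\<^esub> T b"
    if "a \<in> carrier G" "b \<in> carrier G" for a b
    using that by (auto simp: hom_def)
  then show ?thesis by (auto simp: hom_def G.inv_mult G.m_ac)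
qed

lemma one_minus_t_subgroup:
  assumes "lam_module G T"
  shows "subgroup (one_minus_t G T) G"
proof -
  interpret G: comm_group G using lam_moduleD[OF assms] by simp
  interpret h: group_hom G G "\<lambda>x. x \<otimes>\<^bsub>G\<^esub> inv\<^bsub>G\<^esub> (T x)"
    by unfold_locales (rule one_minus_t_hom[OF assms])
  show ?thesis unfolding one_minus_t_def by (rule h.img_is_subgroup)
qed

text \<open>(1 - t)G contains 0; this lets us cancel |(1 - t)N| in cardinality identities.\<close>

lemma card_one_minus_t_pos:
  assumes "lam_module G T" "finite (carrier G)"
  shows "0 < card (one_minus_t G T)"
proof -
  have "subgroup (one_minus_t G T) G" by (rule one_minus_t_subgroup[OF assms(1)])
  then have "\<one>\<^bsub>G\<^esub> \<in> one_minus_t G T" "one_minus_t G T \<subseteq> carrier G"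
    by (auto dest: subgroup.one_closed subgroup.subset)
  then show ?thesis using assms(2) by (auto simp: card_gt_0_iff dest: finite_subset)
qed

lemma (in comm_group) inj_on_subgroup_times_powers:
  fixes d :: nat
  assumes S: "subgroup S G" and x: "x \<in> carrier G"
    and no_pow: "\<And>k::nat. 0 < k \<Longrightarrow> k < d \<Longrightarrow> x [^] k \<notin> S"
  shows "inj_on (\<lambda>(u, k). u \<otimes> x [^] k) (S \<times> {..<d})"
proof -
  have S_carrier: "S \<subseteq> carrier G" using S by (rule subgroup.subset)
  have same_exp: "k = k'"
    if "u \<in> S" "u' \<in> S" "k \<le> k'" "k' < d" "u \<otimes> x [^] k = u' \<otimes> x [^] k'" for u u' k k'
  proof -
    have uu': "u \<in> carrier G" "u' \<in> carrier G" using that S_carrier by auto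
    have "u \<otimes> x [^] k = (u' \<otimes> x [^] (k' - k)) \<otimes> x [^] k"
      using that uu' x by (simp add: m_assoc nat_pow_mult)
    then have "u = u' \<otimes> x [^] (k' - k)" using uu' x by (simp add: right_cancel)
    then have "x [^] (k' - k) = inv u' \<otimes> u" using uu' x by (simp add: m_assoc[symmetric])
    also have "\<dots> \<in> S" using that S by (simp add: subgroup.m_closed subgroup.m_inv_closed)
    finally show "k = k'" using no_pow[of "k' - k"] that by linarith
  qed
  show ?thesis
  proof (rule inj_onI, clarsimp)
    fix u k u' k' assume H: "u \<in> S" "k < d" "u' \<in> S" "k' < d" "u \<otimes> x [^] k = u' \<otimes> x [^] k'"
    then have "k = k'" using same_exp[of u u' k k'] same_exp[of u' u k' k] by (cases "k \<le> k'") auto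
    moreover have "u \<in> carrier G" "u' \<in> carrier G" using H S_carrier by auto
    then have "u = u'" using H(5) \<open>k = k'\<close> x by simp
    ultimately show "u = u' \<and> k = k'" by simp
  qed
qed

text \<open>Transport of structure: a Lambda-module can be copied along any injection of its
  carrier into another type.  This lets the construction below stay inside one fixed type.\<close>

lemma lam_module_copy:
  fixes G :: "('c, 'e) monoid_scheme" and \<phi> :: "'c \<Rightarrow> 'd"
  assumes G: "lam_module G T" and inj: "inj_on \<phi> (carrier G)"
  obtains G' :: "'d monoid" and T' where "lam_module G' T'" "lam_hom G T G' T' \<phi>"
    "carrier G' = \<phi> ` carrier G" "one_minus_t G' T' = \<phi> ` one_minus_t G T"
proof -
  interpret G: comm_group G using lam_moduleD[OF G] by simp
  have T: "T \<in> hom G G" "bij_betw T (carrier G) (carrier G)" using lam_moduleD[OF G] by auto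
  define \<psi> where "\<psi> = inv_into (carrier G) \<phi>"
  define G' :: "'d monoid" where
    "G' = \<lparr>carrier = \<phi> ` carrier G, monoid.mult = (\<lambda>a b. \<phi> (\<psi> a \<otimes>\<^bsub>G\<^esub> \<psi> b)), one = \<phi> \<one>\<^bsub>G\<^esub>\<rparr>"
  define T' where "T' = \<phi> \<circ> T \<circ> \<psi>"
  have \<psi>_\<phi>: "\<psi> (\<phi> a) = a" if "a \<in> carrier G" for a
    unfolding \<psi>_def using inj that by (simp add: inv_into_f_f)
  have carrier: "carrier G' = \<phi> ` carrier G" by (simp add: G'_def)
  have mult: "\<phi> a \<otimes>\<^bsub>G'\<^esub> \<phi> b = \<phi> (a \<otimes>\<^bsub>G\<^esub> b)" if "a \<in> carrier G" "b \<in> carrier G" for a b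
    using that by (simp add: G'_def \<psi>_\<phi>)
  have \<phi>_hom: "\<phi> \<in> hom G G'" by (auto simp: hom_def carrier mult)
  have "comm_group (G'\<lparr>carrier := \<phi> ` carrier G, one := \<phi> \<one>\<^bsub>G\<^esub>\<rparr>)"
    by (rule G.hom_imp_img_comm_group[OF \<phi>_hom])
  then have "comm_group G'" by (simp add: G'_def)
  have T'_\<phi>: "T' (\<phi> a) = \<phi> (T a)" if "a \<in> carrier G" for a
    using that by (simp add: T'_def \<psi>_\<phi>)
  have "T' \<in> hom G' G'"
    using T(1) hom_in_carrier[OF T(1)] by (auto simp: hom_def carrier mult T'_\<phi>)
  moreover have "bij_betw T' (carrier G') (carrier G')"
  proof -
    have "bij_betw \<phi> (carrier G) (carrier G')" using inj carrier by (simp add: inj_on_imp_bij_betw)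
    moreover have "bij_betw \<psi> (carrier G') (carrier G)"
      unfolding \<psi>_def carrier using inj by (simp add: bij_betw_inv_into inj_on_imp_bij_betw)
    ultimately show ?thesis unfolding T'_def using T(2) by (blast intro: bij_betw_trans)
  qed
  ultimately have "lam_module G' T'" using \<open>comm_group G'\<close> by (simp add: lam_module_def)
  moreover have "lam_hom G T G' T' \<phi>" using \<phi>_hom T(1) by (simp add: lam_hom_def T'_\<phi> hom_in_carrier)
  moreover have "one_minus_t G' T' = \<phi> ` one_minus_t G T"
  proof -
    interpret G': comm_group G' by fact
    interpret \<phi>: group_hom G G' \<phi> by unfold_locales (rule \<phi>_hom)
    show ?thesis
    using T(1) unfolding one_minus_t_def carrier image_image
    by (intro image_cong) (simp_all add: T'_\<phi> hom_in_carrier)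
  qed
  ultimately show ?thesis using that carrier by blast
qed

lemma div_carry: "(i + j) div n + ((i + j) mod n + k) div n = (i + j + k) div (n::nat)"
  by (simp add: div_add1_eq[of "i + j" k] div_add1_eq[of "(i + j) mod n" k])

text \<open>The module E = M[e] / (d e = y) with t e = e - x has elements
  a + i e (a \<in> M, i < d), written as pairs (a, i); it contains M, and (1 - t) e = x.\<close>

locale cyclic_extension = comm_group M for M :: "('c, 'e) monoid_scheme" (structure) +
  fixes T :: "'c \<Rightarrow> 'c" and x y :: 'c and d :: nat
  assumes T_hom: "T \<in> hom M M" and T_bij: "bij_betw T (carrier M) (carrier M)"
    and x_closed [simp]: "x \<in> carrier M" and y_closed [simp]: "y \<in> carrier M"
    and d_pos: "0 < d" and x_pow_d: "x [^] d = y \<otimes> inv (T y)"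
begin

text \<open>Addition adds the e-coordinates modulo d, each carry d e contributing y; t acts by
  t (a + i e) = t a + i e - i x.\<close>

definition ext :: "('c \<times> nat) monoid" where
  "ext = \<lparr>carrier = carrier M \<times> {..<d},
     monoid.mult = (\<lambda>(a, i) (b, j). (a \<otimes> b \<otimes> y [^] ((i + j) div d), (i + j) mod d)),
     one = (\<one>, 0)\<rparr>"

definition ext_t :: "'c \<times> nat \<Rightarrow> 'c \<times> nat" where
  "ext_t = (\<lambda>(a, i). (T a \<otimes> inv (x [^] i), i))"

lemma ext_carrier: "carrier ext = carrier M \<times> {..<d}"
  by (simp add: ext_def)

lemma ext_mult: "(a, i) \<otimes>\<^bsub>ext\<^esub> (b, j) = (a \<otimes> b \<otimes> y [^] ((i + j) div d), (i + j) mod d)"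
  by (simp add: ext_def)

lemma ext_one: "\<one>\<^bsub>ext\<^esub> = (\<one>, 0)"
  by (simp add: ext_def)

interpretation T: group_hom M M T
  by unfold_locales (rule T_hom)

lemma T_closed [simp]: "a \<in> carrier M \<Longrightarrow> T a \<in> carrier M"
  by (rule T.hom_closed)

text \<open>Applying t to d x = (1 - t) y: t y = y - d x, hence t (n y) = n y - n d x.\<close>

lemma T_y_pow: "T (y [^] n) = inv (x [^] (d * n)) \<otimes> y [^] n"
proof -
  have "T y = inv (x [^] d) \<otimes> y"
    using x_pow_d by (simp add: inv_mult_group m_assoc)
  then have "T (y [^] n) = (inv (x [^] d)) [^] n \<otimes> y [^] n"
    by (simp add: T.hom_nat_pow nat_pow_distrib)
  then show ?thesis
    by (simp add: nat_pow_inv nat_pow_pow)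
qed

lemma ext_mult3:
  assumes "a \<in> carrier M" "b \<in> carrier M" "c \<in> carrier M"
  shows "(a, i) \<otimes>\<^bsub>ext\<^esub> (b, j) \<otimes>\<^bsub>ext\<^esub> (c, k) =
    (a \<otimes> b \<otimes> c \<otimes> y [^] ((i + j + k) div d), (i + j + k) mod d)"
proof -
  have "y [^] ((i + j) div d) \<otimes> y [^] (((i + j) mod d + k) div d) = y [^] ((i + j + k) div d)"
    by (simp add: nat_pow_mult div_carry)
  moreover have "((i + j) mod d + k) mod d = (i + j + k) mod d"
    by (simp add: mod_add_left_eq)
  ultimately show ?thesis using assms by (simp add: ext_mult m_ac)
qed

lemma ext_mult3_right:
  assumes "a \<in> carrier M" "b \<in> carrier M" "c \<in> carrier M"
  shows "(a, i) \<otimes>\<^bsub>ext\<^esub> ((b, j) \<otimes>\<^bsub>ext\<^esub> (c, k)) =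
    (a \<otimes> b \<otimes> c \<otimes> y [^] ((i + j + k) div d), (i + j + k) mod d)"
proof -
  have "y [^] ((j + k) div d) \<otimes> y [^] ((i + (j + k) mod d) div d) = y [^] ((i + j + k) div d)"
    using div_carry[of j k d i] by (simp add: nat_pow_mult add_ac)
  moreover have "(i + (j + k) mod d) mod d = (i + j + k) mod d"
    by (simp add: mod_add_right_eq add.assoc)
  ultimately show ?thesis using assms by (simp add: ext_mult m_ac)
qed

lemma ext_comm_group: "comm_group ext"
proof (rule comm_groupI)
  show "p \<otimes>\<^bsub>ext\<^esub> q \<in> carrier ext" if "p \<in> carrier ext" "q \<in> carrier ext" for p q
    using that d_pos by (cases p, cases q) (simp add: ext_carrier ext_mult)
  show "\<one>\<^bsub>ext\<^esub> \<in> carrier ext"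
    using d_pos by (simp add: ext_carrier ext_one)
  show "p \<otimes>\<^bsub>ext\<^esub> q \<otimes>\<^bsub>ext\<^esub> r = p \<otimes>\<^bsub>ext\<^esub> (q \<otimes>\<^bsub>ext\<^esub> r)"
    if "p \<in> carrier ext" "q \<in> carrier ext" "r \<in> carrier ext" for p q r
    using that by (cases p, cases q, cases r) (simp add: ext_carrier ext_mult3 ext_mult3_right)
  show "p \<otimes>\<^bsub>ext\<^esub> q = q \<otimes>\<^bsub>ext\<^esub> p" if "p \<in> carrier ext" "q \<in> carrier ext" for p q
    using that by (cases p, cases q) (simp add: ext_carrier ext_mult add.commute m_comm)
  show "\<one>\<^bsub>ext\<^esub> \<otimes>\<^bsub>ext\<^esub> p = p" if "p \<in> carrier ext" for p
    using that by (cases p) (simp add: ext_carrier ext_mult ext_one)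
  show "\<exists>q\<in>carrier ext. q \<otimes>\<^bsub>ext\<^esub> p = \<one>\<^bsub>ext\<^esub>" if p: "p \<in> carrier ext" for p
  proof -
    obtain a i where p_eq: "p = (a, i)" "a \<in> carrier M" "i < d"
      using p by (cases p) (auto simp: ext_carrier)
    show ?thesis
    proof (cases "i = 0")
      case True
      then show ?thesis using p_eq d_pos
        by (intro bexI[of _ "(inv a, 0)"]) (simp_all add: ext_carrier ext_mult ext_one)
    next
      case False
      have "d - i + i = d" using p_eq(3) by simp
      then have "(inv (a \<otimes> y), d - i) \<otimes>\<^bsub>ext\<^esub> (a, i) = (inv (a \<otimes> y) \<otimes> (a \<otimes> y), 0)"
        using d_pos p_eq(2) by (simp add: ext_mult m_assoc)
      then show ?thesis using p_eq False
        by (intro bexI[of _ "(inv (a \<otimes> y), d - i)"]) (simp_all add: ext_carrier ext_one)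
    qed
  qed
qed

lemma ext_t_pair: "ext_t (a, i) = (T a \<otimes> inv (x [^] i), i)"
  by (simp add: ext_t_def)

text \<open>t is additive on E; the only subtle point is that a carry d e = y is mapped to
  t y = y - d x, matching t (d e) = d e - d x.\<close>

lemma ext_t_hom: "ext_t \<in> hom ext ext"
proof (rule homI)
  show "ext_t p \<in> carrier ext" if "p \<in> carrier ext" for p
    using that by (cases p) (simp add: ext_carrier ext_t_pair)
  show "ext_t (p \<otimes>\<^bsub>ext\<^esub> q) = ext_t p \<otimes>\<^bsub>ext\<^esub> ext_t q"
    if p: "p \<in> carrier ext" and q: "q \<in> carrier ext" for p q
  proof -
    obtain a i b j where pq: "p = (a, i)" "q = (b, j)" "a \<in> carrier M" "b \<in> carrier M"
      using p q by (cases p, cases q) (auto simp: ext_carrier)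
    define P where "P = (i + j) div d"
    define R where "R = (i + j) mod d"
    have "x [^] (d * P) \<otimes> x [^] R = x [^] i \<otimes> x [^] j"
      by (simp add: nat_pow_mult P_def R_def)
    then have carry: "inv (x [^] (d * P)) \<otimes> inv (x [^] R) = inv (x [^] i) \<otimes> inv (x [^] j)"
      by (simp add: inv_mult[symmetric])
    have "T (a \<otimes> b \<otimes> y [^] P) \<otimes> inv (x [^] R) =
        (T a \<otimes> T b \<otimes> y [^] P) \<otimes> (inv (x [^] (d * P)) \<otimes> inv (x [^] R))"
      using pq by (simp add: T_y_pow m_ac)
    also have "\<dots> = (T a \<otimes> inv (x [^] i)) \<otimes> (T b \<otimes> inv (x [^] j)) \<otimes> y [^] P"
      using pq by (simp add: carry m_ac)
    finally show ?thesis
      unfolding pq by (simp add: ext_mult ext_t_pair P_def R_def)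
  qed
qed

lemma ext_t_bij: "bij_betw ext_t (carrier ext) (carrier ext)"
proof -
  define T' where "T' = inv_into (carrier M) T"
  have T'_T: "T' (T a) = a" and T_T': "T (T' a) = a" and T'_closed: "T' a \<in> carrier M"
    if "a \<in> carrier M" for a
    using that T_bij unfolding T'_def bij_betw_def
    by (auto simp: inv_into_f_f f_inv_into_f inv_into_into)
  show ?thesis
  proof (rule bij_betw_byWitness[where f' = "\<lambda>(a, i). (T' (a \<otimes> x [^] i), i)"])
    show "\<forall>p\<in>carrier ext. (\<lambda>(a, i). (T' (a \<otimes> x [^] i), i)) (ext_t p) = p"
      by (auto simp: ext_carrier ext_t_pair m_assoc T'_T)
    show "\<forall>p\<in>carrier ext. ext_t ((\<lambda>(a, i). (T' (a \<otimes> x [^] i), i)) p) = p"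
      by (auto simp: ext_carrier ext_t_pair m_assoc T_T' T'_closed)
    show "ext_t ` carrier ext \<subseteq> carrier ext"
      by (auto simp: ext_carrier ext_t_pair)
    show "(\<lambda>(a, i). (T' (a \<otimes> x [^] i), i)) ` carrier ext \<subseteq> carrier ext"
      by (auto simp: ext_carrier T'_closed)
  qed
qed

lemma ext_lam_module: "lam_module ext ext_t"
  by (simp add: lam_module_def ext_comm_group ext_t_hom ext_t_bij)

lemma ext_embedding: "lam_hom M T ext ext_t (\<lambda>a. (a, 0))"
  using d_pos by (auto simp: lam_hom_def hom_def ext_carrier ext_mult ext_t_pair)

lemma ext_one_minus_t_pair:
  assumes "a \<in> carrier M" "i < d"
  shows "(a, i) \<otimes>\<^bsub>ext\<^esub> inv\<^bsub>ext\<^esub> ext_t (a, i) = (a \<otimes> inv (T a) \<otimes> x [^] i, 0)"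
proof -
  interpret E: comm_group ext by (rule ext_comm_group)
  have "a \<otimes> inv (T a) \<otimes> x [^] i \<otimes> (T a \<otimes> inv (x [^] i)) =
      a \<otimes> (inv (T a) \<otimes> T a) \<otimes> (x [^] i \<otimes> inv (x [^] i))"
    using assms by (simp add: m_ac)
  then have "(a \<otimes> inv (T a) \<otimes> x [^] i, 0) \<otimes>\<^bsub>ext\<^esub> ext_t (a, i) = (a, i)"
    using assms by (simp add: ext_mult ext_t_pair)
  moreover have "(a, i) \<in> carrier ext" "ext_t (a, i) \<in> carrier ext"
    using assms by (simp_all add: ext_carrier ext_t_pair)
  ultimately show ?thesis
    using assms d_pos by (simp add: E.inv_solve_right' ext_carrier)
qed

lemma ext_one_minus_t: "one_minus_t ext ext_t = (\<lambda>(u, k). (u \<otimes> x [^] k, 0)) ` (one_minus_t M T \<times> {..<d})"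
proof -
  have "one_minus_t ext ext_t = (\<lambda>(a, i). (a \<otimes> inv (T a) \<otimes> x [^] i, 0)) ` (carrier M \<times> {..<d})"
    unfolding one_minus_t_def ext_carrier by (intro image_cong) (auto simp: ext_one_minus_t_pair)
  also have "\<dots> = (\<lambda>(u, k). (u \<otimes> x [^] k, 0)) ` ((\<lambda>(a, i). (a \<otimes> inv (T a), i)) ` (carrier M \<times> {..<d}))"
    by (simp add: image_image case_prod_beta)
  also have "(\<lambda>(a, i). (a \<otimes> inv (T a), i)) ` (carrier M \<times> {..<d}) = one_minus_t M T \<times> {..<d}"
    unfolding one_minus_t_def by auto
  finally show ?thesis .
qed

lemma card_ext: "card (carrier ext) = card (carrier M) * d"
  by (simp add: ext_carrier card_cartesian_product)

lemma card_ext_one_minus_t: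
  assumes "\<And>k. 0 < k \<Longrightarrow> k < d \<Longrightarrow> x [^] k \<notin> one_minus_t M T"
  shows "card (one_minus_t ext ext_t) = card (one_minus_t M T) * d"
proof -
  have "lam_module M T" by (simp add: lam_module_def comm_group_axioms T_hom T_bij)
  then have "inj_on (\<lambda>(u, k). u \<otimes> x [^] k) (one_minus_t M T \<times> {..<d})"
    by (intro inj_on_subgroup_times_powers one_minus_t_subgroup x_closed assms)
  then have "inj_on (\<lambda>(u, k). (u \<otimes> x [^] k, 0::nat)) (one_minus_t M T \<times> {..<d})"
    by (auto simp: inj_on_def)
  then show ?thesis
    by (simp add: ext_one_minus_t card_image card_cartesian_product)
qed

end

lemma adjoin_preimage:
  fixes M :: "('c, 'e) monoid_scheme"
  assumes M: "lam_module M T" "finite (carrier M)"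
    and x: "x \<in> carrier M" "x \<notin> one_minus_t M T"
  obtains E :: "('c \<times> nat) monoid" and tE d where
    "lam_module E tE" "finite (carrier E)" "lam_hom M T E tE (\<lambda>a. (a, 0))" "1 < d"
    "card (carrier E) = card (carrier M) * d"
    "card (one_minus_t E tE) = card (one_minus_t M T) * d"
    "one_minus_t E tE = (\<lambda>(u, k). (u \<otimes>\<^bsub>M\<^esub> x [^]\<^bsub>M\<^esub> k, 0)) ` (one_minus_t M T \<times> {..<d})"
proof -
  interpret M: comm_group M using lam_moduleD[OF M(1)] by simp
  define S where "S = one_minus_t M T"
  have S: "subgroup S M" unfolding S_def by (rule one_minus_t_subgroup[OF M(1)])
  have "0 < order M \<and> x [^]\<^bsub>M\<^esub> order M \<in> S"
    using M(2) x(1) M.pow_order_eq_1 subgroup.one_closed[OF S]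
    by (auto simp: order_def card_gt_0_iff)
  then have ex: "\<exists>d::nat. 0 < d \<and> x [^]\<^bsub>M\<^esub> d \<in> S" by blast
  define d where "d = (LEAST d::nat. 0 < d \<and> x [^]\<^bsub>M\<^esub> d \<in> S)"
  have d: "0 < d" "x [^]\<^bsub>M\<^esub> d \<in> S"
    using LeastI_ex[OF ex] unfolding d_def by auto
  have d_min: "x [^]\<^bsub>M\<^esub> k \<notin> S" if "0 < k" "k < d" for k :: nat
    using not_less_Least[of k "\<lambda>d. 0 < d \<and> x [^]\<^bsub>M\<^esub> d \<in> S"] that unfolding d_def by blast
  have "d \<noteq> 1" using d(2) x unfolding S_def by auto
  then have "1 < d" using d(1) by linarith
  obtain y where y: "y \<in> carrier M" "x [^]\<^bsub>M\<^esub> d = y \<otimes>\<^bsub>M\<^esub> inv\<^bsub>M\<^esub> (T y)"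
    using d(2) unfolding S_def one_minus_t_def by auto
  interpret E: cyclic_extension M T x y d
    using lam_moduleD[OF M(1)] x(1) y d(1) by unfold_locales auto
  show thesis
  proof (rule that[of E.ext E.ext_t d])
    show "1 < d" by fact
    show "finite (carrier E.ext)" using M(2) by (simp add: E.ext_carrier)
    show "card (one_minus_t E.ext E.ext_t) = card (one_minus_t M T) * d"
      using d_min unfolding S_def by (rule E.card_ext_one_minus_t)
  qed (simp_all add: E.ext_lam_module E.ext_embedding E.card_ext E.ext_one_minus_t)
qed

definition admissible :: "('a, 'b) monoid_scheme \<Rightarrow> ('a \<Rightarrow> 'a) \<Rightarrow> ('c, 'd) monoid_scheme
    \<Rightarrow> ('c \<Rightarrow> 'c) \<Rightarrow> ('a \<Rightarrow> 'c) \<Rightarrow> bool" where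
  "admissible N tN M tM f \<longleftrightarrow> lam_module M tM \<and> finite (carrier M) \<and> lam_hom N tN M tM f
     \<and> inj_on f (carrier N) \<and> one_minus_t M tM \<subseteq> f ` carrier N
     \<and> card (carrier M) * card (one_minus_t N tN) = card (carrier N) * card (one_minus_t M tM)"

lemma admissible_self:
  assumes "lam_module N tN" "finite (carrier N)"
  shows "admissible N tN N tN id"
  using assms one_minus_t_subgroup[OF assms(1)] subgroup.subset
  by (fastforce simp: admissible_def lam_hom_def hom_def)

lemma admissible_transport:
  fixes M :: "('c, 'e) monoid_scheme" and \<phi> :: "'c \<Rightarrow> 'd"
  assumes adm: "admissible N tN M tM f" and inj: "inj_on \<phi> (carrier M)"
  obtains M' :: "'d monoid" and tM' where "admissible N tN M' tM' (\<phi> \<circ> f)"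
    "card (one_minus_t M' tM') = card (one_minus_t M tM)"
proof -
  have M: "lam_module M tM" "finite (carrier M)" and f: "lam_hom N tN M tM f"
    and f_inj: "inj_on f (carrier N)" and sub: "one_minus_t M tM \<subseteq> f ` carrier N"
    and card_eq: "card (carrier M) * card (one_minus_t N tN) = card (carrier N) * card (one_minus_t M tM)"
    using adm by (auto simp: admissible_def)
  obtain M' :: "'d monoid" and tM' where M': "lam_module M' tM'" "lam_hom M tM M' tM' \<phi>"
    "carrier M' = \<phi> ` carrier M" "one_minus_t M' tM' = \<phi> ` one_minus_t M tM"
    using lam_module_copy[OF M(1) inj] by blast
  have f_carrier: "f ` carrier N \<subseteq> carrier M"
    using f by (auto simp: lam_hom_def hom_def)
  have S_M: "one_minus_t M tM \<subseteq> carrier M"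
    using one_minus_t_subgroup[OF M(1)] by (rule subgroup.subset)
  have "card (carrier M') = card (carrier M)" "card (one_minus_t M' tM') = card (one_minus_t M tM)"
    using inj S_M M'(3,4) by (simp_all add: card_image inj_on_subset)
  moreover have "inj_on (\<phi> \<circ> f) (carrier N)"
    using f_inj inj f_carrier by (simp add: comp_inj_on inj_on_subset)
  moreover have "one_minus_t M' tM' \<subseteq> (\<phi> \<circ> f) ` carrier N"
    using sub M'(4) by (auto simp: image_comp[symmetric])
  ultimately have "admissible N tN M' tM' (\<phi> \<circ> f)"
    using M M'(1,3) lam_hom_comp[OF f M'(2)] card_eq by (simp add: admissible_def)
  then show thesis using that \<open>card (one_minus_t M' tM') = _\<close> by blast
qed

lemma admissible_extend:
  fixes M :: "('c, 'e) monoid_scheme"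
  assumes N: "lam_module N tN" and adm: "admissible N tN M tM f"
    and ne: "one_minus_t M tM \<noteq> f ` carrier N"
  obtains E :: "('c \<times> nat) monoid" and tE f' where "admissible N tN E tE f'"
    "card (one_minus_t M tM) < card (one_minus_t E tE)"
proof -
  have M: "lam_module M tM" "finite (carrier M)" and f: "lam_hom N tN M tM f"
    and f_inj: "inj_on f (carrier N)" and sub: "one_minus_t M tM \<subseteq> f ` carrier N"
    and card_eq: "card (carrier M) * card (one_minus_t N tN) = card (carrier N) * card (one_minus_t M tM)"
    using adm by (auto simp: admissible_def)
  interpret N: comm_group N using lam_moduleD[OF N] by simp
  interpret M: comm_group M using lam_moduleD[OF M(1)] by simp
  interpret f: group_hom N M f using f by unfold_locales (simp add: lam_hom_def)
  have fN: "subgroup (f ` carrier N) M" by (rule f.img_is_subgroup)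
  obtain x where x: "x \<in> f ` carrier N" "x \<notin> one_minus_t M tM" using sub ne by blast
  have x_carrier: "x \<in> carrier M" using x(1) subgroup.subset[OF fN] by blast
  obtain E :: "('c \<times> nat) monoid" and tE d where E: "lam_module E tE" "finite (carrier E)"
    "lam_hom M tM E tE (\<lambda>a. (a, 0))" "1 < d"
    "card (carrier E) = card (carrier M) * d"
    "card (one_minus_t E tE) = card (one_minus_t M tM) * d"
    "one_minus_t E tE = (\<lambda>(u, k). (u \<otimes>\<^bsub>M\<^esub> x [^]\<^bsub>M\<^esub> k, 0)) ` (one_minus_t M tM \<times> {..<d})"
    using adjoin_preimage[OF M x_carrier x(2)] by blast
  define f' where "f' = (\<lambda>a. (a, 0::nat)) \<circ> f"
  obtain n where n: "n \<in> carrier N" "x = f n" using x(1) by blast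
  have "u \<otimes>\<^bsub>M\<^esub> x [^]\<^bsub>M\<^esub> k \<in> f ` carrier N" if "u \<in> one_minus_t M tM" for u and k :: nat
  proof -
    have "x [^]\<^bsub>M\<^esub> k \<in> f ` carrier N" using n by (simp add: f.hom_nat_pow[symmetric])
    then show ?thesis using that sub fN by (blast intro: subgroup.m_closed)
  qed
  then have "one_minus_t E tE \<subseteq> f' ` carrier N"
    unfolding E(7) f'_def by (auto simp: image_comp[symmetric])
  moreover have "inj_on f' (carrier N)"
    using f_inj by (simp add: f'_def inj_on_def)
  moreover have "card (carrier E) * card (one_minus_t N tN) = card (carrier N) * card (one_minus_t E tE)"
    using card_eq E(5,6) by (simp add: algebra_simps)
  ultimately have "admissible N tN E tE f'"
    using E(1,2) lam_hom_comp[OF f E(3)] by (simp add: admissible_def f'_def)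
  moreover have "card (one_minus_t M tM) < card (one_minus_t E tE)"
    using E(4,6) card_one_minus_t_pos[OF M] by simp
  ultimately show thesis using that by blast
qed

text \<open>Since (1 - t)M \<subseteq> f(N), an admissible M has at most |N|^2 elements, so it can always be
  copied into the fixed type 'a \<times> 'a.\<close>

lemma admissible_card_bound:
  assumes N: "lam_module N tN" "finite (carrier N)" and adm: "admissible N tN M tM f"
  shows "card (carrier M) \<le> card (carrier N \<times> carrier N)"
proof -
  have sub: "one_minus_t M tM \<subseteq> f ` carrier N"
    and card_eq: "card (carrier M) * card (one_minus_t N tN) = card (carrier N) * card (one_minus_t M tM)"
    using adm by (auto simp: admissible_def)
  have "card (one_minus_t M tM) \<le> card (carrier N)"
    using sub N(2) by (meson card_image_le card_mono finite_imageI order_trans)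
  have "card (carrier M) \<le> card (carrier M) * card (one_minus_t N tN)"
    using card_one_minus_t_pos[OF N] by simp
  also have "\<dots> \<le> card (carrier N) * card (carrier N)"
    unfolding card_eq using \<open>card (one_minus_t M tM) \<le> card (carrier N)\<close> by simp
  finally show ?thesis by (simp add: card_cartesian_product)
qed

text \<open>One enlargement step within the fixed type 'a \<times> 'a: extend, then copy back along an
  injection into carrier N \<times> carrier N.\<close>

lemma admissible_step:
  fixes N :: "('a, 'b) monoid_scheme" and M :: "('a \<times> 'a) monoid"
  assumes N: "lam_module N tN" "finite (carrier N)" and adm: "admissible N tN M tM f"
    and ne: "one_minus_t M tM \<noteq> f ` carrier N"
  obtains M' :: "('a \<times> 'a) monoid" and tM' f' where "admissible N tN M' tM' f'"
    "card (one_minus_t M tM) < card (one_minus_t M' tM')"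
proof -
  obtain E :: "(('a \<times> 'a) \<times> nat) monoid" and tE f' where E: "admissible N tN E tE f'"
    and grows: "card (one_minus_t M tM) < card (one_minus_t E tE)"
    using admissible_extend[OF N(1) adm ne] by blast
  have "finite (carrier E)" using E by (simp add: admissible_def)
  then obtain \<phi> :: "('a \<times> 'a) \<times> nat \<Rightarrow> 'a \<times> 'a" where "inj_on \<phi> (carrier E)"
    using card_le_inj[OF _ _ admissible_card_bound[OF N E]] N(2) by blast
  then obtain M' :: "('a \<times> 'a) monoid" and tM' where "admissible N tN M' tM' (\<phi> \<circ> f')"
    "card (one_minus_t M' tM') = card (one_minus_t E tE)"
    using admissible_transport[OF E] by blast
  then show thesis using that grows by simp
qed

text \<open>Iterating the step from N itself: |(1 - t)M| \<le> |f(N)| = |N| bounds the number of steps.\<close>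

lemma admissible_solution:
  fixes N :: "('a, 'b) monoid_scheme"
  assumes N: "lam_module N tN" "finite (carrier N)"
  obtains M :: "('a \<times> 'a) monoid" and tM f where "admissible N tN M tM f"
    "one_minus_t M tM = f ` carrier N"
proof -
  have inj_diag: "inj_on (\<lambda>a. (a, a)) (carrier N)" by (simp add: inj_on_def)
  obtain M0 :: "('a \<times> 'a) monoid" and tM0 where M0: "admissible N tN M0 tM0 ((\<lambda>a. (a, a)) \<circ> id)"
    using admissible_transport[OF admissible_self[OF N] inj_diag] by blast
  have "\<exists>(M' :: ('a \<times> 'a) monoid) tM' f'. admissible N tN M' tM' f' \<and> one_minus_t M' tM' = f' ` carrier N"
    if "admissible N tN M tM f" for M :: "('a \<times> 'a) monoid" and tM f
    using that
  proof (induction "card (carrier N) - card (one_minus_t M tM)" arbitrary: M tM f rule: less_induct)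
    case less
    show ?case
    proof (cases "one_minus_t M tM = f ` carrier N")
      case True
      then show ?thesis using less.prems by blast
    next
      case False
      obtain M' :: "('a \<times> 'a) monoid" and tM' f' where M': "admissible N tN M' tM' f'"
        and grows: "card (one_minus_t M tM) < card (one_minus_t M' tM')"
        using admissible_step[OF N less.prems False] by blast
      have "card (one_minus_t M' tM') \<le> card (carrier N)"
        using M' N(2) unfolding admissible_def
        by (meson card_image_le card_mono finite_imageI order_trans)
      then show ?thesis using less.hyps[OF _ M'] grows by simp
    qed
  qed
  then show thesis using M0 that by blast
qed

text \<open>For a solution, Lagrange's theorem turns the admissibility identity into
  |M / f(N)| = |N / (1 - t)N|.\<close>

lemma admissible_solution_index:
  assumes N: "lam_module N tN" "finite (carrier N)" and adm: "admissible N tN M tM f"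
    and eq: "one_minus_t M tM = f ` carrier N"
  shows "card (rcosets\<^bsub>M\<^esub> (f ` carrier N)) = card (rcosets\<^bsub>N\<^esub> (one_minus_t N tN))"
proof -
  have M: "lam_module M tM" and f: "lam_hom N tN M tM f" and f_inj: "inj_on f (carrier N)"
    and card_eq: "card (carrier M) * card (one_minus_t N tN) = card (carrier N) * card (one_minus_t M tM)"
    using adm by (auto simp: admissible_def)
  interpret N: comm_group N using lam_moduleD[OF N(1)] by simp
  interpret M: comm_group M using lam_moduleD[OF M] by simp
  interpret f: group_hom N M f using f by unfold_locales (simp add: lam_hom_def)
  have card_fN: "card (f ` carrier N) = card (carrier N)" using f_inj by (simp add: card_image)
  have lagrange_M: "card (rcosets\<^bsub>M\<^esub> (f ` carrier N)) * card (carrier N) = card (carrier M)"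
    using M.lagrange[OF f.img_is_subgroup] card_fN by (simp add: order_def)
  have lagrange_N: "card (rcosets\<^bsub>N\<^esub> (one_minus_t N tN)) * card (one_minus_t N tN) = card (carrier N)"
    using N.lagrange[OF one_minus_t_subgroup[OF N(1)]] by (simp add: order_def)
  have "card (rcosets\<^bsub>M\<^esub> (f ` carrier N)) * (card (carrier N) * card (one_minus_t N tN)) =
      card (carrier M) * card (one_minus_t N tN)"
    by (simp flip: lagrange_M)
  also have "\<dots> = card (carrier N) * card (carrier N)"
    using card_eq eq card_fN by simp
  also have "\<dots> = card (rcosets\<^bsub>N\<^esub> (one_minus_t N tN)) * (card (carrier N) * card (one_minus_t N tN))"
    by (simp flip: lagrange_N)
  finally have "card (rcosets\<^bsub>M\<^esub> (f ` carrier N)) * (card (carrier N) * card (one_minus_t N tN)) =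
      card (rcosets\<^bsub>N\<^esub> (one_minus_t N tN)) * (card (carrier N) * card (one_minus_t N tN))" .
  moreover have "0 < card (carrier N) * card (one_minus_t N tN)"
    using card_one_minus_t_pos[OF N] N(2) by (auto simp: card_gt_0_iff)
  ultimately show ?thesis by simp
qed

theorem theorem4p3:
  fixes N :: "('a, 'b) monoid_scheme" and tN :: "'a \<Rightarrow> 'a" and l :: nat
  assumes "lam_module N tN"
    and "finite (carrier N)"
    and "card (rcosets\<^bsub>N\<^esub> (one_minus_t N tN)) = l"
  shows "\<exists>(M :: ('a \<times> 'a) monoid) tM f.
           lam_module M tM \<and> finite (carrier M) \<and>
           lam_hom N tN M tM f \<and> inj_on f (carrier N) \<and>
           card (rcosets\<^bsub>M\<^esub> (f ` carrier N)) = l \<and>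
           one_minus_t M tM = f ` carrier N"
proof -
  obtain M :: "('a \<times> 'a) monoid" and tM f where adm: "admissible N tN M tM f"
    and eq: "one_minus_t M tM = f ` carrier N"
    using admissible_solution[OF assms(1,2)] by blast
  have "card (rcosets\<^bsub>M\<^esub> (f ` carrier N)) = l"
    using admissible_solution_index[OF assms(1,2) adm eq] assms(3) by simp
  then show ?thesis using adm eq unfolding admissible_def by blast
qed

end
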